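(* Let $(\mathfrak{A},\mathfrak{A}_0)$ be a CQ*-algebra as in the context, let $H=H^*\in\mathfrak{A}$ and $\omega\in E(\mathfrak{A}_0)$, and suppose $\overline{\omega}$ is a nondegenerate ground state of $H$ with eigenvalue $\alpha_*$. Then the following are equivalent: (i) $\overline{\omega}$ is a gapped ground state of $H$; (ii) there exists $\Delta>0$ such that $-i\,\overline{\omega}(A^*\delta_H(A))\ge\Delta\left(\omega(A^*A)-|\omega(A)|^2\right)$ for all $A\in\mathfrak{A}_0$.
   Context: Let $\mathfrak{A}_0$ be a unital C*-algebra with C*-norm $\|\cdot\|_0$ and unit $I$, and $\|\cdot\|$ another norm on $\mathfrak{A}_0$ with $\|A\|\le\|A\|_0$, $\|AB\|\le\|A\|\,\|B\|_0$, $\|A^*\|=\|A\|$. $\mathfrak{A}$ is the $\|\cdot\|$-completion of $\mathfrak{A}_0$, with $XA:=\lim A_nA$, $AX:=\lim AA_n$, $X^*:=\lim A_n^*$ for $X\in\mathfrak{A}$, $A\in\mathfrak{A}_0$, $A_n\in\mathfrak{A}_0$, $\|A_n-X\|\to0$. $E(\mathfrak{A}_0)$ is the set of positive linear functionals $\omega$ on $\mathfrak{A}_0$ with $\omega(I)=1$ and $|\omega(A)|\le\gamma\|A\|$ for some $\gamma>0$; $\overline{\omega}$ is its continuous extension to $\mathfrak{A}$. $(\pi_\omega,\lambda_\omega,\mathcal{H}_\omega)$ is the GNS construction of $\omega$ on $\mathfrak{A}_0$ ($\lambda_\omega$ linear with dense range, $(\lambda_\omega(A)|\lambda_\omega(B))=\omega(B^*A)$).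 For $X\in\mathfrak{A}$, $B\in\mathfrak{A}_0$, $\pi_{\overline{\omega}}(X)\lambda_\omega(B)$ is the conjugate-linear functional on $\lambda_\omega(\mathfrak{A}_0)$ given by $\langle\pi_{\overline{\omega}}(X)\lambda_\omega(B),\lambda_\omega(C)\rangle=\overline{\omega}(C^*XB)$; it is bounded if it extends continuously to $\mathcal{H}_\omega$, and then $[\cdot]$ denotes the representing vector. $\delta_H(A):=i(HA-AH)$ for $A\in\mathfrak{A}_0$; $\overline{\omega}(A^*HA)$ means $\overline{\omega}(A^*(HA))$. $\overline{\omega}$ is a ground state for $H$ with eigenvalue $\alpha_*$ if $\overline{\omega}(AH)=\alpha_*\overline{\omega}(A)$ for all $A\in\mathfrak{A}_0$ and $\langle\pi_{\overline{\omega}}(H)\lambda_\omega(B),\lambda_\omega(B)\rangle\ge\alpha_*(\lambda_\omega(B)|\lambda_\omega(B))$ for all $B\in\mathfrak{A}_0$. Let $\mathrm{Ker}(\pi_{\overline{\omega}}(H)-\alpha_*I)$ denote the set of vectors $\lambda_\omega(B)$, $B\in\mathfrak{A}_0$, such that $\pi_{\overline{\omega}}(H)\lambda_\omega(B)$ is bounded and $[\pi_{\overline{\omega}}(H)\lambda_\omega(B)]=\alpha_*\lambda_\omega(B)$. The ground state $\overline{\omega}$ is nondegenerate if $\mathrm{Ker}(\pi_{\overline{\omega}}(H)-\alpha_*I)=\mathbb{C}\lambda_\omega(I)$, and gapped if there is $\Delta>0$ such that $\overline{\omega}(A^*HA)\ge(\alpha_*+\Delta)\omega(A^*A)$ for all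 $A\in\mathfrak{A}_0$ with $\lambda_\omega(A)\in(\mathrm{Ker}(\pi_{\overline{\omega}}(H)-\alpha_*I))^\perp$. *)

theory Defs
  imports "HOL-Analysis.Analysis" "HOL-Library.Complex_Order"
begin

(* Abstract algebraic/normed structure, with complex scalars given     *)
(* explicitly (HOL has no complex vector space class).                 *)

definition cvector_space :: "(complex \<Rightarrow> 'v::ab_group_add \<Rightarrow> 'v) \<Rightarrow> bool" where
  "cvector_space sc \<longleftrightarrow>
     (\<forall>x. sc 1 x = x) \<and> (\<forall>a b x. sc (a * b) x = sc a (sc b x)) \<and>
     (\<forall>a b x. sc (a + b) x = sc a x + sc b x) \<and> (\<forall>a x y. sc a (x + y) = sc a x + sc a y)"

definition is_cnorm :: "(complex \<Rightarrow> 'v::ab_group_add \<Rightarrow> 'v) \<Rightarrow> ('v \<Rightarrow> real) \<Rightarrow> bool" where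
  "is_cnorm sc nm \<longleftrightarrow>
     (\<forall>x. 0 \<le> nm x) \<and> (\<forall>x. nm x = 0 \<longleftrightarrow> x = 0) \<and>
     (\<forall>x y. nm (x + y) \<le> nm x + nm y) \<and> (\<forall>a x. nm (sc a x) = cmod a * nm x)"

definition is_complete :: "('v::ab_group_add \<Rightarrow> real) \<Rightarrow> bool" where
  "is_complete nm \<longleftrightarrow>
     (\<forall>f::nat \<Rightarrow> 'v. (\<forall>e>0. \<exists>N. \<forall>m\<ge>N. \<forall>k\<ge>N. nm (f m - f k) < e) \<longrightarrow>
        (\<exists>L. (\<lambda>k. nm (f k - L)) \<longlonglongrightarrow> 0))"

definition nconv :: "('v::ab_group_add \<Rightarrow> real) \<Rightarrow> (nat \<Rightarrow> 'v) \<Rightarrow> 'v \<Rightarrow> bool" where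
  "nconv nm f L \<longleftrightarrow> (\<lambda>k. nm (f k - L)) \<longlonglongrightarrow> 0"

definition unital_cstar_algebra ::
  "(complex \<Rightarrow> 'a::ring_1 \<Rightarrow> 'a) \<Rightarrow> ('a \<Rightarrow> 'a) \<Rightarrow> ('a \<Rightarrow> real) \<Rightarrow> bool" where
  "unital_cstar_algebra sc st n0 \<longleftrightarrow>
     cvector_space sc \<and>
     (\<forall>a x y. sc a (x * y) = sc a x * y) \<and> (\<forall>a x y. sc a (x * y) = x * sc a y) \<and>
     (\<forall>x y. st (x + y) = st x + st y) \<and> (\<forall>a x. st (sc a x) = sc (cnj a) (st x)) \<and>
     (\<forall>x y. st (x * y) = st y * st x) \<and> (\<forall>x. st (st x) = x) \<and>
     is_cnorm sc n0 \<and> (\<forall>x y. n0 (x * y) \<le> n0 x * n0 y) \<and>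
     (\<forall>x. n0 (st x * x) = (n0 x)\<^sup>2) \<and> is_complete n0"

definition cq_norm ::
  "(complex \<Rightarrow> 'a::ring_1 \<Rightarrow> 'a) \<Rightarrow> ('a \<Rightarrow> 'a) \<Rightarrow> ('a \<Rightarrow> real) \<Rightarrow> ('a \<Rightarrow> real) \<Rightarrow> bool" where
  "cq_norm sc st n0 n \<longleftrightarrow>
     is_cnorm sc n \<and> (\<forall>A. n A \<le> n0 A) \<and> (\<forall>A B. n (A * B) \<le> n A * n0 B) \<and>
     (\<forall>A. n (st A) = n A)"

definition is_completion ::
  "(complex \<Rightarrow> 'a::ring_1 \<Rightarrow> 'a) \<Rightarrow> ('a \<Rightarrow> real) \<Rightarrow> ('a \<Rightarrow> 'x::ab_group_add) \<Rightarrow>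
   (complex \<Rightarrow> 'x \<Rightarrow> 'x) \<Rightarrow> ('x \<Rightarrow> real) \<Rightarrow> bool" where
  "is_completion sc n ix scX nX \<longleftrightarrow>
     cvector_space scX \<and> is_cnorm scX nX \<and> is_complete nX \<and>
     (\<forall>A B. ix (A + B) = ix A + ix B) \<and> (\<forall>c A. ix (sc c A) = scX c (ix A)) \<and>
     (\<forall>A. nX (ix A) = n A) \<and>
     (\<forall>X. \<forall>e>0. \<exists>A. nX (X - ix A) < e)"

definition cqstar_setting ::
  "(complex \<Rightarrow> 'a::ring_1 \<Rightarrow> 'a) \<Rightarrow> ('a \<Rightarrow> 'a) \<Rightarrow> ('a \<Rightarrow> real) \<Rightarrow> ('a \<Rightarrow> real) \<Rightarrow>
   ('a \<Rightarrow> 'x::ab_group_add) \<Rightarrow> (complex \<Rightarrow> 'x \<Rightarrow> 'x) \<Rightarrow> ('x \<Rightarrow> real) \<Rightarrow> bool" where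
  "cqstar_setting sc st n0 n ix scX nX \<longleftrightarrow>
     unital_cstar_algebra sc st n0 \<and> cq_norm sc st n0 n \<and> is_completion sc n ix scX nX"

definition rmul :: "('a::ring_1 \<Rightarrow> 'x::ab_group_add) \<Rightarrow> ('x \<Rightarrow> real) \<Rightarrow> 'x \<Rightarrow> 'a \<Rightarrow> 'x" where
  "rmul ix nX X A = (THE Y. \<forall>f. nconv nX (\<lambda>k. ix (f k)) X \<longrightarrow> nconv nX (\<lambda>k. ix (f k * A)) Y)"

definition lmul :: "('a::ring_1 \<Rightarrow> 'x::ab_group_add) \<Rightarrow> ('x \<Rightarrow> real) \<Rightarrow> 'a \<Rightarrow> 'x \<Rightarrow> 'x" where
  "lmul ix nX A X = (THE Y. \<forall>f. nconv nX (\<lambda>k. ix (f k)) X \<longrightarrow> nconv nX (\<lambda>k. ix (A * f k)) Y)"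

definition starX :: "('a::ring_1 \<Rightarrow> 'x::ab_group_add) \<Rightarrow> ('a \<Rightarrow> 'a) \<Rightarrow> ('x \<Rightarrow> real) \<Rightarrow> 'x \<Rightarrow> 'x" where
  "starX ix st nX X = (THE Y. \<forall>f. nconv nX (\<lambda>k. ix (f k)) X \<longrightarrow> nconv nX (\<lambda>k. ix (st (f k))) Y)"

definition state_E ::
  "(complex \<Rightarrow> 'a::ring_1 \<Rightarrow> 'a) \<Rightarrow> ('a \<Rightarrow> 'a) \<Rightarrow> ('a \<Rightarrow> real) \<Rightarrow> ('a \<Rightarrow> complex) set" where
  "state_E sc st n = {\<omega>.
     (\<forall>A B. \<omega> (A + B) = \<omega> A + \<omega> B) \<and> (\<forall>c A. \<omega> (sc c A) = c * \<omega> A) \<and>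
     (\<forall>A. 0 \<le> \<omega> (st A * A)) \<and> \<omega> 1 = 1 \<and>
     (\<exists>\<gamma>>0. \<forall>A. cmod (\<omega> A) \<le> \<gamma> * n A)}"

definition omega_bar :: "('a::ring_1 \<Rightarrow> 'x::ab_group_add) \<Rightarrow> ('x \<Rightarrow> real) \<Rightarrow> ('a \<Rightarrow> complex) \<Rightarrow> 'x \<Rightarrow> complex" where
  "omega_bar ix nX \<omega> X = (THE z. \<forall>f. nconv nX (\<lambda>k. ix (f k)) X \<longrightarrow> (\<lambda>k. \<omega> (f k)) \<longlonglongrightarrow> z)"

(* GNS: (\<lambda>(A) | \<lambda>(B)) = \<omega>(B^* A) *)
definition gns_ip :: "('a::ring_1 \<Rightarrow> 'a) \<Rightarrow> ('a \<Rightarrow> complex) \<Rightarrow> 'a \<Rightarrow> 'a \<Rightarrow> complex" where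
  "gns_ip st \<omega> A B = \<omega> (st B * A)"

(* \<lambda>(A) = \<lambda>(B) in H_\<omega> *)
definition gns_eq :: "('a::ring_1 \<Rightarrow> 'a) \<Rightarrow> ('a \<Rightarrow> complex) \<Rightarrow> 'a \<Rightarrow> 'a \<Rightarrow> bool" where
  "gns_eq st \<omega> A B \<longleftrightarrow> gns_ip st \<omega> (A - B) (A - B) = 0"

(* < \<pi>bar(X) \<lambda>(B), \<lambda>(C) > = \<omega>bar(C^* X B) *)
definition pi_form ::
  "('a::ring_1 \<Rightarrow> 'x::ab_group_add) \<Rightarrow> ('a \<Rightarrow> 'a) \<Rightarrow> ('x \<Rightarrow> real) \<Rightarrow> ('a \<Rightarrow> complex) \<Rightarrow>
   'x \<Rightarrow> 'a \<Rightarrow> 'a \<Rightarrow> complex" where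
  "pi_form ix st nX \<omega> X B C = omega_bar ix nX \<omega> (lmul ix nX (st C) (rmul ix nX X B))"

(* \<pi>bar(X) \<lambda>(B) is bounded on \<lambda>(\<AA>0) (hence extends continuously to H_\<omega>) *)
definition pi_bounded ::
  "('a::ring_1 \<Rightarrow> 'x::ab_group_add) \<Rightarrow> ('a \<Rightarrow> 'a) \<Rightarrow> ('x \<Rightarrow> real) \<Rightarrow> ('a \<Rightarrow> complex) \<Rightarrow>
   'x \<Rightarrow> 'a \<Rightarrow> bool" where
  "pi_bounded ix st nX \<omega> X B \<longleftrightarrow>
     (\<exists>M. \<forall>C. cmod (pi_form ix st nX \<omega> X B C) \<le> M * sqrt (Re (gns_ip st \<omega> C C)))"

(* \<lambda>(B) \<in> Ker(\<pi>bar(H) - \<alpha> I): bounded and [\<pi>bar(H)\<lambda>(B)] = \<alpha> \<lambda>(B),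
   i.e. the representing vector has the same inner products with the
   dense set \<lambda>(\<AA>0) as \<alpha> \<lambda>(B) *)
definition in_ker ::
  "('a::ring_1 \<Rightarrow> 'x::ab_group_add) \<Rightarrow> ('a \<Rightarrow> 'a) \<Rightarrow> ('x \<Rightarrow> real) \<Rightarrow> ('a \<Rightarrow> complex) \<Rightarrow>
   'x \<Rightarrow> real \<Rightarrow> 'a \<Rightarrow> bool" where
  "in_ker ix st nX \<omega> H \<alpha> B \<longleftrightarrow>
     pi_bounded ix st nX \<omega> H B \<and>
     (\<forall>C. pi_form ix st nX \<omega> H B C = complex_of_real \<alpha> * gns_ip st \<omega> B C)"

definition ground_state ::
  "('a::ring_1 \<Rightarrow> 'x::ab_group_add) \<Rightarrow> ('a \<Rightarrow> 'a) \<Rightarrow> ('x \<Rightarrow> real) \<Rightarrow> ('a \<Rightarrow> complex) \<Rightarrow>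
   'x \<Rightarrow> real \<Rightarrow> bool" where
  "ground_state ix st nX \<omega> H \<alpha> \<longleftrightarrow>
     (\<forall>A. omega_bar ix nX \<omega> (lmul ix nX A H) = complex_of_real \<alpha> * \<omega> A) \<and>
     (\<forall>B. complex_of_real \<alpha> * gns_ip st \<omega> B B \<le> pi_form ix st nX \<omega> H B B)"

(* Ker(\<pi>bar(H) - \<alpha> I) = \<complex> \<lambda>(I) *)
definition nondegenerate_ground_state ::
  "(complex \<Rightarrow> 'a::ring_1 \<Rightarrow> 'a) \<Rightarrow> ('a::ring_1 \<Rightarrow> 'x::ab_group_add) \<Rightarrow> ('a \<Rightarrow> 'a) \<Rightarrow>
   ('x \<Rightarrow> real) \<Rightarrow> ('a \<Rightarrow> complex) \<Rightarrow> 'x \<Rightarrow> real \<Rightarrow> bool" where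
  "nondegenerate_ground_state sc ix st nX \<omega> H \<alpha> \<longleftrightarrow>
     ground_state ix st nX \<omega> H \<alpha> \<and>
     (\<forall>B. in_ker ix st nX \<omega> H \<alpha> B \<longleftrightarrow> (\<exists>c. gns_eq st \<omega> B (sc c 1)))"

definition gapped_ground_state ::
  "('a::ring_1 \<Rightarrow> 'x::ab_group_add) \<Rightarrow> ('a \<Rightarrow> 'a) \<Rightarrow> ('x \<Rightarrow> real) \<Rightarrow> ('a \<Rightarrow> complex) \<Rightarrow>
   'x \<Rightarrow> real \<Rightarrow> bool" where
  "gapped_ground_state ix st nX \<omega> H \<alpha> \<longleftrightarrow>
     ground_state ix st nX \<omega> H \<alpha> \<and>
     (\<exists>\<Delta>>0. \<forall>A. (\<forall>B. in_ker ix st nX \<omega> H \<alpha> B \<longrightarrow> gns_ip st \<omega> A B = 0) \<longrightarrow>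
        complex_of_real (\<alpha> + \<Delta>) * \<omega> (st A * A)
          \<le> omega_bar ix nX \<omega> (lmul ix nX (st A) (rmul ix nX H A)))"

definition deltaH ::
  "('a::ring_1 \<Rightarrow> 'x::ab_group_add) \<Rightarrow> (complex \<Rightarrow> 'x \<Rightarrow> 'x) \<Rightarrow> ('x \<Rightarrow> real) \<Rightarrow> 'x \<Rightarrow> 'a \<Rightarrow> 'x" where
  "deltaH ix scX nX H A = scX \<i> (rmul ix nX H A - lmul ix nX A H)"

end

(* Write E(B, C) = \<omega>bar(C\<^sup>* H B) for the form of \<pi>(H) on the GNS space and
   N(A) = \<omega>(A\<^sup>* A).  The eigen-equation \<omega>bar(A H) = \<alpha> \<omega>(A) turns the commutator
   expectation -i \<omega>bar(A\<^sup>* \<delta>_H(A)) into E(A, A) - \<alpha> N(A) and gives E(I, C) = \<alpha> conj \<omega>(C).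
   The ground-state inequality makes E real on the diagonal, hence hermitian, so E(A, I) = 0
   whenever \<omega>(A) = 0.  By Cauchy-Schwarz a null vector of the GNS form is orthogonal to
   everything, so nondegeneracy identifies the orthogonal complement of Ker(\<pi>(H) - \<alpha>) with
   {A. \<omega>(A) = 0}.  Splitting A = A' + \<omega>(A) I with \<omega>(A') = 0 changes neither E(A, A) - \<alpha> N(A)
   nor N(A) - |\<omega>(A)|\<^sup>2, and for centred A both gap conditions read (\<alpha> + \<Delta>) N(A) \<le> E(A, A). *)

theory Submission
  imports Defs
begin

(* The norm of the completion and cmod are only used through these properties,
   so a single convergence theory serves both. *)
definition group_norm :: "('v::ab_group_add \<Rightarrow> real) \<Rightarrow> bool" where
  "group_norm ny \<longleftrightarrow> (\<forall>x. 0 \<le> ny x) \<and> (\<forall>x y. ny (x + y) \<le> ny x + ny y) \<and>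
     (\<forall>x. ny (- x) = ny x) \<and> (\<forall>x. ny x = 0 \<longrightarrow> x = 0)"

lemma group_norm_nonneg: "group_norm ny \<Longrightarrow> 0 \<le> ny x"
  unfolding group_norm_def by blast

lemma group_norm_triangle: "group_norm ny \<Longrightarrow> ny (x + y) \<le> ny x + ny y"
  unfolding group_norm_def by blast

lemma group_norm_minus_commute: "group_norm ny \<Longrightarrow> ny (x - y) = ny (y - x)"
  unfolding group_norm_def by (metis minus_diff_eq)

lemma group_norm_eq_zero: "group_norm ny \<Longrightarrow> ny x = 0 \<Longrightarrow> x = 0"
  unfolding group_norm_def by blast

lemma group_norm_triangle_diff: "group_norm ny \<Longrightarrow> ny (x - z) \<le> ny (x - y) + ny (y - z)"
  using group_norm_triangle[of ny "x - y" "y - z"] by simp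

lemma group_norm_cmod: "group_norm cmod"
  unfolding group_norm_def by (simp add: norm_triangle_ineq)

lemma cvector_space_scale_zero:
  assumes "cvector_space sc" shows "sc 0 x = 0"
proof -
  have "sc (0 + 0) x = sc 0 x + sc 0 x" using assms unfolding cvector_space_def by blast
  then show ?thesis by simp
qed

lemma cvector_space_scale_minus_one:
  assumes "cvector_space sc" shows "sc (- 1) x = - x"
proof -
  have "sc (- 1 + 1) x = sc (- 1) x + sc 1 x" "sc 1 x = x"
    using assms unfolding cvector_space_def by blast+
  then have "sc (- 1) x + x = 0" using cvector_space_scale_zero[OF assms] by simp
  then show ?thesis by (simp add: eq_neg_iff_add_eq_0)
qed

lemma cvector_space_scale_diff_right:
  assumes "cvector_space sc" shows "sc c (x - y) = sc c x - sc c y"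
proof -
  have "sc c (x - y + y) = sc c (x - y) + sc c y" using assms unfolding cvector_space_def by blast
  then show ?thesis by (simp add: eq_diff_eq)
qed

lemma cnorm_group_norm:
  assumes "cvector_space sc" "is_cnorm sc nm" shows "group_norm nm"
proof -
  have "nm (- x) = nm x" for x
  proof -
    have "nm (sc (- 1) x) = cmod (- 1) * nm x" using assms(2) unfolding is_cnorm_def by blast
    then show ?thesis using cvector_space_scale_minus_one[OF assms(1), of x] by simp
  qed
  then show ?thesis using assms(2) unfolding is_cnorm_def group_norm_def by simp
qed

lemma nconv_cmod_iff: "nconv cmod f L \<longleftrightarrow> f \<longlonglongrightarrow> L"
  unfolding nconv_def by (simp add: tendsto_norm_zero_iff LIM_zero_iff)

lemma is_complete_cmod: "is_complete (cmod :: complex \<Rightarrow> real)"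
  unfolding is_complete_def
proof (intro allI impI)
  fix f :: "nat \<Rightarrow> complex"
  assume "\<forall>e>0. \<exists>N. \<forall>m\<ge>N. \<forall>k\<ge>N. cmod (f m - f k) < e"
  then have "convergent f" by (simp add: Cauchy_def dist_norm Cauchy_convergent_iff[symmetric])
  then show "\<exists>L. (\<lambda>k. cmod (f k - L)) \<longlonglongrightarrow> 0"
    using nconv_cmod_iff unfolding convergent_def nconv_def by blast
qed

lemma nconv_unique:
  assumes "group_norm ny" "nconv ny f L" "nconv ny f L'" shows "L = L'"
proof -
  have "ny (L - L') \<le> ny (f k - L) + ny (f k - L')" for k
    using group_norm_triangle_diff[OF assms(1), where x=L and y="f k" and z=L']
      group_norm_minus_commute[OF assms(1), of L "f k"] by simp
  moreover have "(\<lambda>k. ny (f k - L) + ny (f k - L')) \<longlonglongrightarrow> 0"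
    using tendsto_add[OF assms(2,3)[unfolded nconv_def]] by simp
  ultimately have "ny (L - L') \<le> 0" by (intro LIMSEQ_le_const) auto
  then have "ny (L - L') = 0" using group_norm_nonneg[OF assms(1)] by (meson order_antisym)
  then show ?thesis using group_norm_eq_zero[OF assms(1)] by fastforce
qed

lemma nconv_Cauchy:
  assumes "group_norm ny" "nconv ny f L" "0 < e"
  shows "\<exists>N. \<forall>m\<ge>N. \<forall>k\<ge>N. ny (f m - f k) < e"
proof -
  obtain N where N: "\<And>k. k \<ge> N \<Longrightarrow> \<bar>ny (f k - L)\<bar> < e / 2"
    using LIMSEQ_D[OF assms(2)[unfolded nconv_def], of "e / 2"] \<open>0 < e\<close> by auto
  have "ny (f m - f k) < e" if "m \<ge> N" "k \<ge> N" for m k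
    using group_norm_triangle_diff[OF assms(1), where x="f m" and y=L and z="f k"]
      group_norm_minus_commute[OF assms(1), of L "f k"] N[OF that(1)] N[OF that(2)] by simp
  then show ?thesis by blast
qed

lemma nconv_add:
  assumes "group_norm ny" "nconv ny f L" "nconv ny g M"
  shows "nconv ny (\<lambda>k. f k + g k) (L + M)"
  unfolding nconv_def
proof (rule Lim_null_comparison)
  have "ny (f k + g k - (L + M)) \<le> ny (f k - L) + ny (g k - M)" for k
    using group_norm_triangle[OF assms(1), of "f k - L" "g k - M"] by (simp add: add_diff_add)
  then show "\<forall>\<^sub>F k in sequentially. norm (ny (f k + g k - (L + M))) \<le> ny (f k - L) + ny (g k - M)"
    using group_norm_nonneg[OF assms(1)] by simp
  show "(\<lambda>k. ny (f k - L) + ny (g k - M)) \<longlonglongrightarrow> 0"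
    using tendsto_add[OF assms(2,3)[unfolded nconv_def]] by simp
qed

locale sesquilinear =
  fixes sc :: "complex \<Rightarrow> 'v::ab_group_add \<Rightarrow> 'v" and \<phi> :: "'v \<Rightarrow> 'v \<Rightarrow> complex"
  assumes add_left: "\<phi> (x + y) z = \<phi> x z + \<phi> y z"
    and scale_left: "\<phi> (sc c x) z = c * \<phi> x z"
    and add_right: "\<phi> x (y + z) = \<phi> x y + \<phi> x z"
    and scale_right: "\<phi> x (sc c z) = cnj c * \<phi> x z"
begin

lemma expand:
  "\<phi> (x + sc c y) (x + sc c y) = \<phi> x x + c * \<phi> y x + cnj c * \<phi> x y + cnj c * c * \<phi> y y"
  by (simp add: add_left add_right scale_left scale_right algebra_simps)

lemma hermitian_if_real_diagonal:
  assumes real: "\<And>x. Im (\<phi> x x) = 0" shows "\<phi> y x = cnj (\<phi> x y)"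
proof -
  have "Im (\<phi> y x) + Im (\<phi> x y) = 0"
    using real[of "x + sc 1 y"] real[of x] real[of y] by (simp add: expand)
  moreover have "Re (\<phi> y x) - Re (\<phi> x y) = 0"
    using real[of "x + sc \<i> y"] real[of x] real[of y] by (simp add: expand)
  ultimately show ?thesis by (simp add: complex_eq_iff)
qed

lemma orthogonal_to_null_vector:
  assumes pos: "\<And>x. 0 \<le> \<phi> x x" and null: "\<phi> d d = 0" shows "\<phi> x d = 0"
proof (rule ccontr)
  assume nz: "\<phi> x d \<noteq> 0"
  define a where "a = \<phi> x d"
  have "\<phi> d x = cnj a"
    unfolding a_def by (rule hermitian_if_real_diagonal) (use pos in \<open>simp add: less_eq_complex_def\<close>)
  moreover have "(cmod a)\<^sup>2 = Re a * Re a + Im a * Im a"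
    unfolding cmod_power2 by (simp add: power2_eq_square)
  ultimately have "Re (\<phi> (x + sc (- of_real t * a) d) (x + sc (- of_real t * a) d))
      = Re (\<phi> x x) - 2 * t * (cmod a)\<^sup>2" for t
    unfolding expand a_def[symmetric] null
    by (simp add: algebra_simps)
  then have "0 \<le> Re (\<phi> x x) - 2 * t * (cmod a)\<^sup>2" for t
    by (metis pos less_eq_complex_def zero_complex.sel(1))
  from this[of "(Re (\<phi> x x) + 1) / (2 * (cmod a)\<^sup>2)"] show False
    using nz unfolding a_def[symmetric] by simp
qed

end

locale cqstar_algebra =
  fixes sc :: "complex \<Rightarrow> 'a::ring_1 \<Rightarrow> 'a" and st :: "'a \<Rightarrow> 'a"
    and n0 n :: "'a \<Rightarrow> real"
    and ix :: "'a \<Rightarrow> 'x::ab_group_add" and scX :: "complex \<Rightarrow> 'x \<Rightarrow> 'x" and nX :: "'x \<Rightarrow> real"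
  assumes setting: "cqstar_setting sc st n0 n ix scX nX"
begin

lemma
  shows scale_one: "sc 1 x = x"
    and scale_mult_left: "sc c (x * y) = sc c x * y"
    and scale_mult_right: "sc c (x * y) = x * sc c y"
    and star_add: "st (x + y) = st x + st y"
    and star_scale: "st (sc c x) = sc (cnj c) (st x)"
    and star_mult: "st (x * y) = st y * st x"
    and star_star: "st (st x) = x"
    and n0_nonneg: "0 \<le> n0 x"
    and norm_mult_le: "n (x * y) \<le> n x * n0 y"
    and norm_star: "n (st x) = n x"
  using setting
  unfolding cqstar_setting_def unital_cstar_algebra_def cvector_space_def cq_norm_def is_cnorm_def
  by metis+

lemma
  shows cvector_space_X: "cvector_space scX"
    and cnorm_X: "is_cnorm scX nX"
    and complete_X: "is_complete nX"
    and ix_add: "ix (x + y) = ix x + ix y"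
    and ix_scale: "ix (sc c x) = scX c (ix x)"
    and ix_norm: "nX (ix x) = n x"
    and ix_dense: "0 < e \<Longrightarrow> \<exists>A. nX (X - ix A) < e"
  using setting unfolding cqstar_setting_def is_completion_def by simp_all

lemma group_norm_X: "group_norm nX"
  by (rule cnorm_group_norm[OF cvector_space_X cnorm_X])

lemma normX_scale: "nX (scX c X) = cmod c * nX X"
  using cnorm_X unfolding is_cnorm_def by simp

lemma ix_diff: "ix (x - y) = ix x - ix y"
  using ix_add[of "x - y" y] by (simp add: eq_diff_eq)

lemma star_one: "st 1 = 1"
  using star_mult[of "st 1" 1] by (simp add: star_star)

lemma nconv_X_unique: "nconv nX f X \<Longrightarrow> nconv nX f Y \<Longrightarrow> X = Y"
  by (rule nconv_unique[OF group_norm_X])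

lemma approximating_sequence: "\<exists>f. nconv nX (\<lambda>k. ix (f k)) X"
proof -
  have "\<forall>k. \<exists>A. nX (X - ix A) < inverse (real (Suc k))"
    using ix_dense by simp
  then obtain f where f: "\<And>k. nX (X - ix (f k)) < inverse (real (Suc k))"
    by metis
  have "(\<lambda>k. nX (ix (f k) - X)) \<longlonglongrightarrow> 0"
  proof (rule Lim_null_comparison[OF _ LIMSEQ_inverse_real_of_nat])
    show "\<forall>\<^sub>F k in sequentially. norm (nX (ix (f k) - X)) \<le> inverse (real (Suc k))"
      using f group_norm_minus_commute[OF group_norm_X] group_norm_nonneg[OF group_norm_X]
      by (simp add: less_imp_le)
  qed
  then show ?thesis unfolding nconv_def by blast
qed

lemma lipschitz_image_Cauchy:
  fixes g :: "'a \<Rightarrow> 'y::ab_group_add"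
  assumes K: "0 \<le> K" and lip: "\<And>A B. ny (g A - g B) \<le> K * n (A - B)"
    and h: "nconv nX (\<lambda>k. ix (h k)) X" and e: "0 < e"
  shows "\<exists>N. \<forall>m\<ge>N. \<forall>k\<ge>N. ny (g (h m) - g (h k)) < e"
proof -
  obtain N where N: "\<And>m k. m \<ge> N \<Longrightarrow> k \<ge> N \<Longrightarrow> nX (ix (h m) - ix (h k)) < e / (K + 1)"
    using nconv_Cauchy[OF group_norm_X h, of "e / (K + 1)"] e K by auto
  have "ny (g (h m) - g (h k)) < e" if "m \<ge> N" "k \<ge> N" for m k
  proof -
    have "ny (g (h m) - g (h k)) \<le> K * nX (ix (h m) - ix (h k))"
      using lip by (simp add: ix_diff[symmetric] ix_norm)
    also have "\<dots> \<le> K * (e / (K + 1))" using N[OF that] K by (intro mult_left_mono) auto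
    also have "\<dots> < e" using e K by (simp add: field_simps)
    finally show ?thesis .
  qed
  then show ?thesis by blast
qed

lemma lipschitz_image_nconv_eq:
  fixes g :: "'a \<Rightarrow> 'y::ab_group_add"
  assumes ny: "group_norm ny" and K: "0 \<le> K" and lip: "\<And>A B. ny (g A - g B) \<le> K * n (A - B)"
    and f: "nconv nX (\<lambda>k. ix (f k)) X" and h: "nconv nX (\<lambda>k. ix (h k)) X"
    and Y: "nconv ny (\<lambda>k. g (h k)) Y"
  shows "nconv ny (\<lambda>k. g (f k)) Y"
  unfolding nconv_def
proof (rule Lim_null_comparison)
  have "ny (g (f k) - Y) \<le> K * (nX (ix (f k) - X) + nX (ix (h k) - X)) + ny (g (h k) - Y)" for k
  proof -
    have "ny (g (f k) - g (h k)) \<le> K * nX (ix (f k) - ix (h k))"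
      using lip by (simp add: ix_diff[symmetric] ix_norm)
    also have "\<dots> \<le> K * (nX (ix (f k) - X) + nX (ix (h k) - X))"
      using group_norm_triangle_diff[OF group_norm_X, where x="ix (f k)" and y=X and z="ix (h k)"]
        group_norm_minus_commute[OF group_norm_X, of X "ix (h k)"] K
      by (intro mult_left_mono) simp_all
    finally show ?thesis
      using group_norm_triangle_diff[OF ny, where x="g (f k)" and y="g (h k)" and z=Y] by linarith
  qed
  then show "\<forall>\<^sub>F k in sequentially. norm (ny (g (f k) - Y))
      \<le> K * (nX (ix (f k) - X) + nX (ix (h k) - X)) + ny (g (h k) - Y)"
    using group_norm_nonneg[OF ny] by simp
  show "(\<lambda>k. K * (nX (ix (f k) - X) + nX (ix (h k) - X)) + ny (g (h k) - Y)) \<longlonglongrightarrow> 0"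
    using f h Y unfolding nconv_def by (auto intro!: tendsto_eq_intros)
qed

lemma nconv_lipschitz_extension:
  fixes g :: "'a \<Rightarrow> 'y::ab_group_add"
  assumes ny: "group_norm ny" and complete: "is_complete ny" and K: "0 \<le> K"
    and lip: "\<And>A B. ny (g A - g B) \<le> K * n (A - B)"
    and f: "nconv nX (\<lambda>k. ix (f k)) X"
  shows "nconv ny (\<lambda>k. g (f k)) (THE Y. \<forall>f. nconv nX (\<lambda>k. ix (f k)) X \<longrightarrow> nconv ny (\<lambda>k. g (f k)) Y)"
proof -
  obtain h where h: "nconv nX (\<lambda>k. ix (h k)) X" using approximating_sequence by blast
  have "\<exists>Y. nconv ny (\<lambda>k. g (h k)) Y"
    unfolding nconv_def
    by (rule complete[unfolded is_complete_def, rule_format]) (rule lipschitz_image_Cauchy[OF K lip h])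
  then obtain Y where Y: "nconv ny (\<lambda>k. g (h k)) Y" ..
  have limit: "\<forall>f. nconv nX (\<lambda>k. ix (f k)) X \<longrightarrow> nconv ny (\<lambda>k. g (f k)) Y"
    using lipschitz_image_nconv_eq[OF ny K lip _ h Y] by blast
  have "(THE Y. \<forall>f. nconv nX (\<lambda>k. ix (f k)) X \<longrightarrow> nconv ny (\<lambda>k. g (f k)) Y) = Y"
    using limit h by (intro the_equality) (auto intro: nconv_unique[OF ny])
  then show ?thesis using limit f by simp
qed

lemma rmul_nconv:
  assumes f: "nconv nX (\<lambda>k. ix (f k)) X"
  shows "nconv nX (\<lambda>k. ix (f k * B)) (rmul ix nX X B)"
  unfolding rmul_def
proof (rule nconv_lipschitz_extension[OF group_norm_X complete_X n0_nonneg _ f])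
  show "nX (ix (A * B) - ix (A' * B)) \<le> n0 B * n (A - A')" for A A'
    using norm_mult_le[of "A - A'" B] by (simp add: ix_diff[symmetric] ix_norm left_diff_distrib mult.commute)
qed

lemma lmul_nconv:
  assumes f: "nconv nX (\<lambda>k. ix (f k)) X"
  shows "nconv nX (\<lambda>k. ix (B * f k)) (lmul ix nX B X)"
  unfolding lmul_def
proof (rule nconv_lipschitz_extension[OF group_norm_X complete_X n0_nonneg _ f])
  fix A A'
  have "n (B * (A - A')) = n (st (A - A') * st B)"
    using norm_star[of "B * (A - A')"] by (simp add: star_mult)
  also have "\<dots> \<le> n0 (st B) * n (A - A')"
    using norm_mult_le[of "st (A - A')" "st B"] by (simp add: norm_star mult.commute)
  finally show "nX (ix (B * A) - ix (B * A')) \<le> n0 (st B) * n (A - A')"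
    by (simp add: ix_diff[symmetric] ix_norm right_diff_distrib)
qed

lemma nconv_X_scale: "nconv nX f X \<Longrightarrow> nconv nX (\<lambda>k. scX c (f k)) (scX c X)"
  unfolding nconv_def
  using tendsto_mult[OF tendsto_const, of "\<lambda>k. nX (f k - X)" 0 sequentially "cmod c"]
  by (simp add: cvector_space_scale_diff_right[OF cvector_space_X, symmetric] normX_scale)

lemma nconv_ix_add:
  "nconv nX (\<lambda>k. ix (f k)) X \<Longrightarrow> nconv nX (\<lambda>k. ix (g k)) Y \<Longrightarrow>
   nconv nX (\<lambda>k. ix (f k + g k)) (X + Y)"
  unfolding ix_add by (rule nconv_add[OF group_norm_X])

lemma nconv_ix_scale:
  "nconv nX (\<lambda>k. ix (f k)) X \<Longrightarrow> nconv nX (\<lambda>k. ix (sc c (f k))) (scX c X)"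
  unfolding ix_scale by (rule nconv_X_scale)

lemma rmul_add_right: "rmul ix nX X (A + B) = rmul ix nX X A + rmul ix nX X B"
proof -
  obtain f where f: "nconv nX (\<lambda>k. ix (f k)) X" using approximating_sequence ..
  have "nconv nX (\<lambda>k. ix (f k * (A + B))) (rmul ix nX X A + rmul ix nX X B)"
    unfolding distrib_left by (rule nconv_ix_add[OF rmul_nconv[OF f] rmul_nconv[OF f]])
  with rmul_nconv[OF f] show ?thesis by (rule nconv_X_unique)
qed

lemma rmul_scale_right: "rmul ix nX X (sc c A) = scX c (rmul ix nX X A)"
proof -
  obtain f where f: "nconv nX (\<lambda>k. ix (f k)) X" using approximating_sequence ..
  have "nconv nX (\<lambda>k. ix (f k * sc c A)) (scX c (rmul ix nX X A))"
    unfolding scale_mult_right[symmetric] by (rule nconv_ix_scale[OF rmul_nconv[OF f]])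
  with rmul_nconv[OF f] show ?thesis by (rule nconv_X_unique)
qed

lemma rmul_one: "rmul ix nX X 1 = X"
proof -
  obtain f where f: "nconv nX (\<lambda>k. ix (f k)) X" using approximating_sequence ..
  from f rmul_nconv[OF f, of 1] show ?thesis by (simp add: nconv_X_unique)
qed

lemma lmul_add_left: "lmul ix nX (A + B) X = lmul ix nX A X + lmul ix nX B X"
proof -
  obtain f where f: "nconv nX (\<lambda>k. ix (f k)) X" using approximating_sequence ..
  have "nconv nX (\<lambda>k. ix ((A + B) * f k)) (lmul ix nX A X + lmul ix nX B X)"
    unfolding distrib_right by (rule nconv_ix_add[OF lmul_nconv[OF f] lmul_nconv[OF f]])
  with lmul_nconv[OF f] show ?thesis by (rule nconv_X_unique)
qed

lemma lmul_scale_left: "lmul ix nX (sc c A) X = scX c (lmul ix nX A X)"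
proof -
  obtain f where f: "nconv nX (\<lambda>k. ix (f k)) X" using approximating_sequence ..
  have "nconv nX (\<lambda>k. ix (sc c A * f k)) (scX c (lmul ix nX A X))"
    unfolding scale_mult_left[symmetric] by (rule nconv_ix_scale[OF lmul_nconv[OF f]])
  with lmul_nconv[OF f] show ?thesis by (rule nconv_X_unique)
qed

lemma lmul_add_right: "lmul ix nX A (X + Y) = lmul ix nX A X + lmul ix nX A Y"
proof -
  obtain f where f: "nconv nX (\<lambda>k. ix (f k)) X" using approximating_sequence ..
  obtain g where g: "nconv nX (\<lambda>k. ix (g k)) Y" using approximating_sequence ..
  have "nconv nX (\<lambda>k. ix (A * (f k + g k))) (lmul ix nX A X + lmul ix nX A Y)"
    unfolding distrib_left by (rule nconv_ix_add[OF lmul_nconv[OF f] lmul_nconv[OF g]])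
  with lmul_nconv[OF nconv_ix_add[OF f g]] show ?thesis by (rule nconv_X_unique)
qed

lemma lmul_diff_right: "lmul ix nX A (X - Y) = lmul ix nX A X - lmul ix nX A Y"
  using lmul_add_right[of A "X - Y" Y] by (simp add: eq_diff_eq)

lemma lmul_scale_right: "lmul ix nX A (scX c X) = scX c (lmul ix nX A X)"
proof -
  obtain f where f: "nconv nX (\<lambda>k. ix (f k)) X" using approximating_sequence ..
  have "nconv nX (\<lambda>k. ix (A * sc c (f k))) (scX c (lmul ix nX A X))"
    unfolding scale_mult_right[symmetric] by (rule nconv_ix_scale[OF lmul_nconv[OF f]])
  with lmul_nconv[OF nconv_ix_scale[OF f]] show ?thesis by (rule nconv_X_unique)
qed

lemma lmul_lmul: "lmul ix nX A (lmul ix nX B X) = lmul ix nX (A * B) X"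
proof -
  obtain f where f: "nconv nX (\<lambda>k. ix (f k)) X" using approximating_sequence ..
  have "nconv nX (\<lambda>k. ix (A * (B * f k))) (lmul ix nX (A * B) X)"
    unfolding mult.assoc[symmetric] by (rule lmul_nconv[OF f])
  with lmul_nconv[OF lmul_nconv[OF f]] show ?thesis by (rule nconv_X_unique)
qed

end

locale cqstar_state = cqstar_algebra +
  fixes \<omega> :: "'a::ring_1 \<Rightarrow> complex"
  assumes state: "\<omega> \<in> state_E sc st n"
begin

lemma
  shows state_add: "\<omega> (A + B) = \<omega> A + \<omega> B"
    and state_scale: "\<omega> (sc c A) = c * \<omega> A"
    and state_nonneg: "0 \<le> \<omega> (st A * A)"
    and state_one: "\<omega> 1 = 1"
  using state unfolding state_E_def by simp_all

lemma state_bounded: "\<exists>\<gamma>>0. \<forall>A. cmod (\<omega> A) \<le> \<gamma> * n A"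
  using state unfolding state_E_def by simp

lemma state_diff: "\<omega> (A - B) = \<omega> A - \<omega> B"
  using state_add[of "A - B" B] by (simp add: eq_diff_eq)

lemma omega_bar_tendsto:
  assumes f: "nconv nX (\<lambda>k. ix (f k)) X"
  shows "(\<lambda>k. \<omega> (f k)) \<longlonglongrightarrow> omega_bar ix nX \<omega> X"
proof -
  obtain \<gamma> where "\<gamma> > 0" and \<gamma>: "\<And>A. cmod (\<omega> A) \<le> \<gamma> * n A"
    using state_bounded by blast
  have "nconv cmod (\<lambda>k. \<omega> (f k)) (omega_bar ix nX \<omega> X)"
    unfolding omega_bar_def nconv_cmod_iff[symmetric]
  proof (rule nconv_lipschitz_extension[OF group_norm_cmod is_complete_cmod _ _ f])
    show "0 \<le> \<gamma>" using \<open>\<gamma> > 0\<close> by simp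
    show "cmod (\<omega> A - \<omega> B) \<le> \<gamma> * n (A - B)" for A B
      using \<gamma>[of "A - B"] by (simp add: state_diff)
  qed
  then show ?thesis by (simp add: nconv_cmod_iff)
qed

lemma omega_bar_add: "omega_bar ix nX \<omega> (X + Y) = omega_bar ix nX \<omega> X + omega_bar ix nX \<omega> Y"
proof -
  obtain f where f: "nconv nX (\<lambda>k. ix (f k)) X" using approximating_sequence ..
  obtain g where g: "nconv nX (\<lambda>k. ix (g k)) Y" using approximating_sequence ..
  have "(\<lambda>k. \<omega> (f k + g k)) \<longlonglongrightarrow> omega_bar ix nX \<omega> X + omega_bar ix nX \<omega> Y"
    unfolding state_add by (rule tendsto_add[OF omega_bar_tendsto[OF f] omega_bar_tendsto[OF g]])
  with omega_bar_tendsto[OF nconv_ix_add[OF f g]] show ?thesis by (rule LIMSEQ_unique)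
qed

lemma omega_bar_diff: "omega_bar ix nX \<omega> (X - Y) = omega_bar ix nX \<omega> X - omega_bar ix nX \<omega> Y"
  using omega_bar_add[of "X - Y" Y] by (simp add: eq_diff_eq)

lemma omega_bar_scale: "omega_bar ix nX \<omega> (scX c X) = c * omega_bar ix nX \<omega> X"
proof -
  obtain f where f: "nconv nX (\<lambda>k. ix (f k)) X" using approximating_sequence ..
  have "(\<lambda>k. \<omega> (sc c (f k))) \<longlonglongrightarrow> c * omega_bar ix nX \<omega> X"
    unfolding state_scale by (rule tendsto_mult[OF tendsto_const omega_bar_tendsto[OF f]])
  with omega_bar_tendsto[OF nconv_ix_scale[OF f]] show ?thesis by (rule LIMSEQ_unique)
qed

sublocale gns: sesquilinear sc "gns_ip st \<omega>"
  by unfold_locales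
    (simp_all add: gns_ip_def distrib_left distrib_right star_add star_scale state_add state_scale
      scale_mult_left[symmetric] scale_mult_right[symmetric])

lemma gns_ip_nonneg: "0 \<le> gns_ip st \<omega> A A"
  unfolding gns_ip_def by (rule state_nonneg)

lemma state_star: "\<omega> (st A) = cnj (\<omega> A)"
  using gns.hermitian_if_real_diagonal[of A 1] gns_ip_nonneg
  by (simp add: gns_ip_def star_one less_eq_complex_def)

lemma gns_null_orthogonal: "gns_eq st \<omega> D 0 \<Longrightarrow> gns_ip st \<omega> A D = 0"
  using gns.orthogonal_to_null_vector[OF gns_ip_nonneg] by (simp add: gns_eq_def)

end

locale cqstar_ground_state = cqstar_state +
  fixes H :: "'x::ab_group_add" and \<alpha> :: real
  assumes nondegenerate: "nondegenerate_ground_state sc ix st nX \<omega> H \<alpha>"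
begin

abbreviation energy :: "'a \<Rightarrow> 'a \<Rightarrow> complex" where
  "energy \<equiv> pi_form ix st nX \<omega> H"

lemma ground: "ground_state ix st nX \<omega> H \<alpha>"
  using nondegenerate unfolding nondegenerate_ground_state_def by simp

lemma eigen: "omega_bar ix nX \<omega> (lmul ix nX A H) = of_real \<alpha> * \<omega> A"
  using ground unfolding ground_state_def by simp

lemma energy_lower_bound: "of_real \<alpha> * gns_ip st \<omega> B B \<le> energy B B"
  using ground unfolding ground_state_def by simp

lemma in_ker_iff: "in_ker ix st nX \<omega> H \<alpha> B \<longleftrightarrow> (\<exists>c. gns_eq st \<omega> B (sc c 1))"
  using nondegenerate unfolding nondegenerate_ground_state_def by simp

sublocale energy: sesquilinear sc energy
  by unfold_locales
    (simp_all add: pi_form_def rmul_add_right rmul_scale_right lmul_add_right lmul_scale_right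
      star_add star_scale lmul_add_left lmul_scale_left omega_bar_add omega_bar_scale)

lemma energy_real_diagonal: "Im (energy B B) = 0"
  using energy_lower_bound[of B] gns_ip_nonneg[of B] by (simp add: less_eq_complex_def)

lemma energy_unit_left: "energy 1 C = of_real \<alpha> * cnj (\<omega> C)"
  by (simp add: pi_form_def rmul_one eigen state_star)

lemma energy_unit_right: "\<omega> A = 0 \<Longrightarrow> energy A 1 = 0"
  using energy.hermitian_if_real_diagonal[OF energy_real_diagonal, of A 1]
  by (simp add: energy_unit_left)

lemma energy_shift:
  "\<omega> A = 0 \<Longrightarrow> energy (A + sc c 1) (A + sc c 1) = energy A A + cnj c * c * of_real \<alpha>"
  by (simp add: energy.expand energy_unit_left energy_unit_right state_one)

lemma gns_shift:
  "\<omega> A = 0 \<Longrightarrow> \<omega> (st (A + sc c 1) * (A + sc c 1)) = \<omega> (st A * A) + cnj c * c"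
  using gns.expand[of A c 1] by (simp add: gns_ip_def star_one state_one state_star)

lemma unit_in_ker: "in_ker ix st nX \<omega> H \<alpha> 1"
proof -
  have "gns_eq st \<omega> 1 (sc 1 1)"
    using state_diff[of 0 0] by (simp add: gns_eq_def gns_ip_def scale_one)
  then show ?thesis unfolding in_ker_iff by blast
qed

lemma orthogonal_to_ker_iff:
  "(\<forall>B. in_ker ix st nX \<omega> H \<alpha> B \<longrightarrow> gns_ip st \<omega> A B = 0) \<longleftrightarrow> \<omega> A = 0"
proof
  assume "\<forall>B. in_ker ix st nX \<omega> H \<alpha> B \<longrightarrow> gns_ip st \<omega> A B = 0"
  then have "gns_ip st \<omega> A 1 = 0" using unit_in_ker by blast
  then show "\<omega> A = 0" by (simp add: gns_ip_def star_one)
next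
  assume "\<omega> A = 0"
  show "\<forall>B. in_ker ix st nX \<omega> H \<alpha> B \<longrightarrow> gns_ip st \<omega> A B = 0"
  proof (intro allI impI)
    fix B assume "in_ker ix st nX \<omega> H \<alpha> B"
    then obtain c where "gns_eq st \<omega> B (sc c 1)" using in_ker_iff by blast
    then have "gns_ip st \<omega> A (B - sc c 1) = 0" by (intro gns_null_orthogonal) (simp add: gns_eq_def)
    moreover have "gns_ip st \<omega> A 1 = 0" using \<open>\<omega> A = 0\<close> by (simp add: gns_ip_def star_one)
    ultimately show "gns_ip st \<omega> A B = 0"
      using gns.add_right[of A "B - sc c 1" "sc c 1"] by (simp add: gns.scale_right)
  qed
qed

lemma commutator_expectation:
  "- \<i> * omega_bar ix nX \<omega> (lmul ix nX (st A) (deltaH ix scX nX H A))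
     = energy A A - of_real \<alpha> * \<omega> (st A * A)"
  by (simp add: deltaH_def pi_form_def lmul_scale_right lmul_diff_right omega_bar_scale
      omega_bar_diff lmul_lmul eigen algebra_simps)

lemma gapped_iff_centered_gap:
  "gapped_ground_state ix st nX \<omega> H \<alpha> \<longleftrightarrow>
     (\<exists>\<Delta>>0. \<forall>A. \<omega> A = 0 \<longrightarrow> of_real (\<alpha> + \<Delta>) * \<omega> (st A * A) \<le> energy A A)"
  unfolding gapped_ground_state_def orthogonal_to_ker_iff using ground by (simp add: pi_form_def)

lemma variance_bound_iff_centered_gap:
  "(\<forall>A. of_real \<Delta> * (\<omega> (st A * A) - of_real ((cmod (\<omega> A))\<^sup>2))
        \<le> energy A A - of_real \<alpha> * \<omega> (st A * A)) \<longleftrightarrow>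
   (\<forall>A. \<omega> A = 0 \<longrightarrow> of_real (\<alpha> + \<Delta>) * \<omega> (st A * A) \<le> energy A A)"
    (is "(\<forall>A. ?variance A) \<longleftrightarrow> (\<forall>A. \<omega> A = 0 \<longrightarrow> ?gap A)")
proof
  assume variance: "\<forall>A. ?variance A"
  show "\<forall>A. \<omega> A = 0 \<longrightarrow> ?gap A"
  proof (intro allI impI)
    fix A assume "\<omega> A = 0"
    then show "?gap A" using variance[rule_format, of A] by (simp add: algebra_simps le_diff_eq)
  qed
next
  assume centered: "\<forall>A. \<omega> A = 0 \<longrightarrow> ?gap A"
  show "\<forall>A. ?variance A"
  proof
    fix A
    define c where "c = \<omega> A"
    define A' where "A' = A - sc c 1"
    have A: "A = A' + sc c 1" and "\<omega> A' = 0"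
      unfolding A'_def c_def by (simp_all add: state_diff state_scale state_one)
    have "of_real ((cmod (\<omega> A))\<^sup>2) = cnj c * c"
      unfolding c_def complex_norm_square by (rule mult.commute)
    then show "?variance A"
      using centered \<open>\<omega> A' = 0\<close>
      unfolding A energy_shift[OF \<open>\<omega> A' = 0\<close>] gns_shift[OF \<open>\<omega> A' = 0\<close>]
      by (auto simp: algebra_simps le_diff_eq)
  qed
qed

lemma gapped_iff_commutator_bound:
  "gapped_ground_state ix st nX \<omega> H \<alpha> \<longleftrightarrow>
    (\<exists>\<Delta>>0. \<forall>A. of_real \<Delta> * (\<omega> (st A * A) - of_real ((cmod (\<omega> A))\<^sup>2))
        \<le> - \<i> * omega_bar ix nX \<omega> (lmul ix nX (st A) (deltaH ix scX nX H A)))"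
  unfolding commutator_expectation variance_bound_iff_centered_gap gapped_iff_centered_gap ..

end

theorem theorem5p10:
  fixes sc :: "complex \<Rightarrow> 'a::ring_1 \<Rightarrow> 'a" and st :: "'a \<Rightarrow> 'a"
    and n0 n :: "'a \<Rightarrow> real"
    and ix :: "'a \<Rightarrow> 'x::ab_group_add" and scX :: "complex \<Rightarrow> 'x \<Rightarrow> 'x" and nX :: "'x \<Rightarrow> real"
    and H :: 'x and \<omega> :: "'a \<Rightarrow> complex" and \<alpha> :: real
  assumes "cqstar_setting sc st n0 n ix scX nX"
    and "starX ix st nX H = H"
    and "\<omega> \<in> state_E sc st n"
    and "nondegenerate_ground_state sc ix st nX \<omega> H \<alpha>"
  shows "gapped_ground_state ix st nX \<omega> H \<alpha> \<longleftrightarrow>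
    (\<exists>\<Delta>>0. \<forall>A. complex_of_real \<Delta> * (\<omega> (st A * A) - complex_of_real ((cmod (\<omega> A))\<^sup>2))
        \<le> - \<i> * omega_bar ix nX \<omega> (lmul ix nX (st A) (deltaH ix scX nX H A)))"
proof -
  interpret cqstar_ground_state sc st n0 n ix scX nX \<omega> H \<alpha>
    using assms(1,3,4) by unfold_locales
  show ?thesis by (rule gapped_iff_commutator_bound)
qed

end
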